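(* Let $\Omega\subseteq\mathbb{R}^{m\times m}$ and let $d:\Omega^2\to\mathbb{R}$ be a pseudometric. Let $n\ge 2$ and define the Fermat distance function induced by $d$ as the map $d_F:\Omega^n\to\mathbb{R}$, $$d_F(A_1,\dots,A_n)=\min_{B\in\Omega}\sum_{i=1}^n d(A_i,B).$$ Then $d_F$ is a pseudo $n$-metric.
   Context: A pseudometric on $\Omega$ is a map $d:\Omega^2\to\mathbb{R}$ with $d(A,B)\ge 0$, $d(A,A)=0$, $d(A,B)=d(B,A)$ and $d(A,C)\le d(A,B)+d(B,C)$ for all $A,B,C\in\Omega$. Notation: $A_{1:n}=(A_1,\dots,A_n)$; for $A_{n+1}\in\Omega$, $A^i_{1:n,n+1}$ denotes the sequence $A_{1:n}$ with its $i$-th entry $A_i$ replaced by $A_{n+1}$; for a permutation $\sigma$ of $\{1,\dots,n\}$, $A_{\sigma(1:n)}$ is the sequence whose $i$-th entry is $A_{\sigma(i)}$. A map $D:\Omega^n\to\mathbb{R}$ is a pseudo $n$-metric if for all $A_1,\dots,A_{n+1}\in\Omega$ and all permutations $\sigma$: (1) $D(A_{1:n})\ge 0$; (2) $D(A_{1:n})=D(A_{\sigma(1:n)})$; (3) $D(A_{1:n})\le\sum_{i=1}^n D(A^i_{1:n,n+1})$ (generalized triangle inequality); (4) $D(A,\dots,A)=0$ for all $A\in\Omega$ (self-identity). *)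

theory Defs
  imports "HOL-Analysis.Analysis"
begin

definition pseudometric_on :: "'a set \<Rightarrow> ('a \<Rightarrow> 'a \<Rightarrow> real) \<Rightarrow> bool" where
  "pseudometric_on \<Omega> d \<longleftrightarrow>
     (\<forall>A\<in>\<Omega>. \<forall>B\<in>\<Omega>. d A B \<ge> 0) \<and>
     (\<forall>A\<in>\<Omega>. d A A = 0) \<and>
     (\<forall>A\<in>\<Omega>. \<forall>B\<in>\<Omega>. d A B = d B A) \<and>
     (\<forall>A\<in>\<Omega>. \<forall>B\<in>\<Omega>. \<forall>C\<in>\<Omega>. d A C \<le> d A B + d B C)"

text \<open>Tuples A_1..A_n are represented as functions nat => 'a, using the entries
  A 0, ..., A (n-1); the extra point A_{n+1} is represented by A n.\<close>
definition pseudo_n_metric_on :: "'a set \<Rightarrow> nat \<Rightarrow> ((nat \<Rightarrow> 'a) \<Rightarrow> real) \<Rightarrow> bool" where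
  "pseudo_n_metric_on \<Omega> n D \<longleftrightarrow>
     (\<forall>A. (\<forall>i<n. A i \<in> \<Omega>) \<longrightarrow> D A \<ge> 0) \<and>
     (\<forall>A \<sigma>. (\<forall>i<n. A i \<in> \<Omega>) \<longrightarrow> \<sigma> permutes {..<n} \<longrightarrow> D (\<lambda>i. A (\<sigma> i)) = D A) \<and>
     (\<forall>A. (\<forall>i\<le>n. A i \<in> \<Omega>) \<longrightarrow> D A \<le> (\<Sum>i<n. D (A(i := A n)))) \<and>
     (\<forall>X\<in>\<Omega>. D (\<lambda>_. X) = 0)"

text \<open>Fermat distance function: min over B in \<Omega> of the sum of d(A_i,B).
  It is written as an infimum; under the attainment hypothesis it is the minimum.\<close>
definition fermat_dist :: "'a set \<Rightarrow> ('a \<Rightarrow> 'a \<Rightarrow> real) \<Rightarrow> nat \<Rightarrow> (nat \<Rightarrow> 'a) \<Rightarrow> real" where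
  "fermat_dist \<Omega> d n A = Inf ((\<lambda>B. \<Sum>i<n. d (A i) B) ` \<Omega>)"

end

theory Submission
  imports Defs
begin

text \<open>For the generalized triangle inequality, let \<open>B\<^sub>0\<close> and \<open>B\<^sub>1\<close> be Fermat points of
  the tuples obtained by replacing \<open>A\<^sub>0\<close>, resp. \<open>A\<^sub>1\<close>, by \<open>A\<^sub>n\<close>. Testing \<open>B\<^sub>0\<close> on the
  original tuple costs \<open>d(A\<^sub>0,B\<^sub>0) - d(A\<^sub>n,B\<^sub>0)\<close> more than the first Fermat distance, and
  by the triangle inequality this excess is at most \<open>d(A\<^sub>0,B\<^sub>1) + d(A\<^sub>n,B\<^sub>1)\<close>, which is
  part of the second Fermat distance because that tuple still contains both \<open>A\<^sub>0\<close>
  and \<open>A\<^sub>n\<close> (here \<open>n \<ge> 2\<close> is used). All other Fermat distances are nonnegative.\<close>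

lemma sum_fun_upd:
  fixes f :: "'a \<Rightarrow> 'b::ab_group_add"
  assumes "finite S" "i \<in> S"
  shows "sum (f(i := y)) S = sum f S - f i + y"
proof -
  have "sum (f(i := y)) S = y + sum (f(i := y)) (S - {i})"
    using sum.remove[OF assms, of "f(i := y)"] by (simp only: fun_upd_same)
  also have "sum (f(i := y)) (S - {i}) = sum f (S - {i})"
    by (rule sum.cong) auto
  also have "sum f (S - {i}) = sum f S - f i"
    using sum.remove[OF assms, of f] by simp
  finally show ?thesis by simp
qed

lemma pseudometric_on_sum_nonneg:
  assumes "pseudometric_on \<Omega> d" "\<forall>i<n. A i \<in> \<Omega>" "B \<in> \<Omega>"
  shows "0 \<le> (\<Sum>i<n. d (A i) B)"
  using assms by (intro sum_nonneg) (auto simp: pseudometric_on_def)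

lemma fermat_dist_le:
  assumes "pseudometric_on \<Omega> d" "\<forall>i<n. A i \<in> \<Omega>" "B \<in> \<Omega>"
  shows "fermat_dist \<Omega> d n A \<le> (\<Sum>i<n. d (A i) B)"
proof -
  have "bdd_below ((\<lambda>B. \<Sum>i<n. d (A i) B) ` \<Omega>)"
    using pseudometric_on_sum_nonneg[OF assms(1,2)] by (intro bdd_belowI[of _ 0]) auto
  then show ?thesis
    unfolding fermat_dist_def using assms(3) by (intro cInf_lower) auto
qed

lemma fermat_dist_eq_minimum:
  assumes "B \<in> \<Omega>" "\<forall>C\<in>\<Omega>. (\<Sum>i<n. d (A i) B) \<le> (\<Sum>i<n. d (A i) C)"
  shows "fermat_dist \<Omega> d n A = (\<Sum>i<n. d (A i) B)"
  unfolding fermat_dist_def using assms by (intro cInf_eq_minimum) auto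

lemma fermat_dist_nonneg:
  assumes "pseudometric_on \<Omega> d" "\<Omega> \<noteq> {}" "\<forall>i<n. A i \<in> \<Omega>"
  shows "0 \<le> fermat_dist \<Omega> d n A"
  unfolding fermat_dist_def using assms(2)
  by (intro cInf_greatest) (auto intro: pseudometric_on_sum_nonneg[OF assms(1,3)])

lemma fermat_dist_permute:
  assumes "\<sigma> permutes {..<n}"
  shows "fermat_dist \<Omega> d n (\<lambda>i. A (\<sigma> i)) = fermat_dist \<Omega> d n A"
proof -
  have "(\<Sum>i<n. d (A (\<sigma> i)) B) = (\<Sum>i<n. d (A i) B)" for B
    using sum.permute[OF assms, of "\<lambda>i. d (A i) B"] by (simp add: comp_def)
  then show ?thesis unfolding fermat_dist_def by simp
qed

lemma fermat_dist_const:
  assumes "pseudometric_on \<Omega> d" "X \<in> \<Omega>"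
  shows "fermat_dist \<Omega> d n (\<lambda>_. X) = 0"
proof -
  have "(\<Sum>i<n. d X X) = 0"
    using assms by (simp add: pseudometric_on_def)
  then show ?thesis
    using assms pseudometric_on_sum_nonneg[OF assms(1), of n "\<lambda>_. X"]
    by (subst fermat_dist_eq_minimum[of X]) auto
qed

lemma fermat_dist_triangle:
  assumes pm: "pseudometric_on \<Omega> d" and "2 \<le> n" and A: "\<forall>i\<le>n. A i \<in> \<Omega>"
    and attained: "\<And>A. (\<forall>i<n. A i \<in> \<Omega>) \<Longrightarrow>
           \<exists>B\<in>\<Omega>. \<forall>C\<in>\<Omega>. (\<Sum>i<n. d (A i) B) \<le> (\<Sum>i<n. d (A i) C)"
  shows "fermat_dist \<Omega> d n A \<le> (\<Sum>i<n. fermat_dist \<Omega> d n (A(i := A n)))"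
proof -
  let ?D = "fermat_dist \<Omega> d n"
  have A_upd: "\<forall>j<n. (A(i := A n)) j \<in> \<Omega>" for i
    using A by auto
  have A0: "A 0 \<in> \<Omega>" and An: "A n \<in> \<Omega>"
    using A by auto
  obtain B0 where B0: "B0 \<in> \<Omega>" "?D (A(0 := A n)) = (\<Sum>j<n. d ((A(0 := A n)) j) B0)"
    using attained[OF A_upd] fermat_dist_eq_minimum by metis
  obtain B1 where B1: "B1 \<in> \<Omega>" "?D (A(1 := A n)) = (\<Sum>j<n. d ((A(1 := A n)) j) B1)"
    using attained[OF A_upd] fermat_dist_eq_minimum by metis
  have "(\<Sum>j<n. d ((A(0 := A n)) j) B0) = sum ((\<lambda>j. d (A j) B0)(0 := d (A n) B0)) {..<n}"
    by (rule sum.cong) auto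
  also have "\<dots> = (\<Sum>j<n. d (A j) B0) - d (A 0) B0 + d (A n) B0"
    using \<open>2 \<le> n\<close> by (intro sum_fun_upd) auto
  finally have cost_B0: "(\<Sum>j<n. d ((A(0 := A n)) j) B0) = (\<Sum>j<n. d (A j) B0) - d (A 0) B0 + d (A n) B0" .
  have detour: "d (A 0) B0 \<le> d (A 0) B1 + d (A n) B1 + d (A n) B0"
    using pm A0 An B0(1) B1(1) unfolding pseudometric_on_def by (smt (verit))
  have excess: "d (A 0) B1 + d (A n) B1 \<le> ?D (A(1 := A n))"
  proof -
    have "(\<Sum>j\<in>{0,1}. d ((A(1 := A n)) j) B1) \<le> (\<Sum>j<n. d ((A(1 := A n)) j) B1)"
      using \<open>2 \<le> n\<close> A B1(1) pm by (intro sum_mono2) (auto simp: pseudometric_on_def)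
    then show ?thesis using B1 by simp
  qed
  have "?D A \<le> (\<Sum>j<n. d (A j) B0)"
    using A by (intro fermat_dist_le[OF pm _ B0(1)]) auto
  also have "\<dots> \<le> ?D (A(0 := A n)) + ?D (A(1 := A n))"
    using B0(2) cost_B0 detour excess by linarith
  also have "\<dots> = (\<Sum>i\<in>{0,1}. ?D (A(i := A n)))"
    by simp
  also have "\<dots> \<le> (\<Sum>i<n. ?D (A(i := A n)))"
    using \<open>2 \<le> n\<close> fermat_dist_nonneg[OF pm _ A_upd] B0(1)
    by (intro sum_mono2) (auto simp del: fun_upd_apply)
  finally show ?thesis .
qed

theorem theorem1:
  fixes \<Omega> :: "(real^'m^'m) set" and d :: "real^'m^'m \<Rightarrow> real^'m^'m \<Rightarrow> real" and n :: nat
  assumes "pseudometric_on \<Omega> d"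
    and "n \<ge> 2"
    and "\<And>A. (\<forall>i<n. A i \<in> \<Omega>) \<Longrightarrow>
           \<exists>B\<in>\<Omega>. \<forall>C\<in>\<Omega>. (\<Sum>i<n. d (A i) B) \<le> (\<Sum>i<n. d (A i) C)"
  shows "pseudo_n_metric_on \<Omega> n (fermat_dist \<Omega> d n)"
proof -
  have nonempty: "\<Omega> \<noteq> {}" if "\<forall>i<n. A i \<in> \<Omega>" for A :: "nat \<Rightarrow> real^'m^'m"
    using that[rule_format, of 0] \<open>n \<ge> 2\<close> by auto
  show ?thesis
    unfolding pseudo_n_metric_on_def
  proof (intro conjI allI impI ballI)
    show "0 \<le> fermat_dist \<Omega> d n A" if "\<forall>i<n. A i \<in> \<Omega>" for A
      using fermat_dist_nonneg[OF assms(1) nonempty[OF that] that] .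
    show "fermat_dist \<Omega> d n (\<lambda>i. A (\<sigma> i)) = fermat_dist \<Omega> d n A"
      if "\<sigma> permutes {..<n}" for A \<sigma>
      using fermat_dist_permute[OF that] .
    show "fermat_dist \<Omega> d n A \<le> (\<Sum>i<n. fermat_dist \<Omega> d n (A(i := A n)))"
      if "\<forall>i\<le>n. A i \<in> \<Omega>" for A
      using fermat_dist_triangle[OF assms(1,2) that assms(3)] .
    show "fermat_dist \<Omega> d n (\<lambda>_. X) = 0" if "X \<in> \<Omega>" for X
      using fermat_dist_const[OF assms(1) that] .
  qed
qed

end
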